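(* The three-element chain $3=\{0<1<2\}$ forms a strong generator of $\mathbf{CPO}$: it is a generator, and for every cpo $B$ and every proper subobject $f\colon A\to B$ (a monomorphism that is not an isomorphism) there is a cpo map $3\to B$ that does not factor through $f$.
   Context: A cpo is a poset in which every chain, including the empty chain, has a join. A cpo map is a map preserving joins of all chains. $\mathbf{CPO}$ is the category of cpo's and cpo maps. A set $\mathcal G$ of objects is a generator if for any two distinct morphisms $f,g\colon A\to B$ there are $G\in\mathcal G$ and $h\colon G\to A$ with $fh\ne gh$. Monomorphisms in $\mathbf{CPO}$ are exactly the injective cpo maps, and isomorphisms are exactly the bijective cpo maps that reflect the order. *)

theory Defs
  imports Main
begin

definition partial_order_on :: "'a set \<Rightarrow> ('a \<Rightarrow> 'a \<Rightarrow> bool) \<Rightarrow> bool" where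
  "partial_order_on S le \<longleftrightarrow>
     (\<forall>x\<in>S. le x x) \<and>
     (\<forall>x\<in>S. \<forall>y\<in>S. le x y \<and> le y x \<longrightarrow> x = y) \<and>
     (\<forall>x\<in>S. \<forall>y\<in>S. \<forall>z\<in>S. le x y \<and> le y z \<longrightarrow> le x z)"

definition is_chain :: "'a set \<Rightarrow> ('a \<Rightarrow> 'a \<Rightarrow> bool) \<Rightarrow> 'a set \<Rightarrow> bool" where
  "is_chain S le C \<longleftrightarrow> C \<subseteq> S \<and> (\<forall>x\<in>C. \<forall>y\<in>C. le x y \<or> le y x)"

definition is_join :: "'a set \<Rightarrow> ('a \<Rightarrow> 'a \<Rightarrow> bool) \<Rightarrow> 'a set \<Rightarrow> 'a \<Rightarrow> bool" where
  "is_join S le C j \<longleftrightarrow> j \<in> S \<and> (\<forall>x\<in>C. le x j) \<and>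
     (\<forall>u\<in>S. (\<forall>x\<in>C. le x u) \<longrightarrow> le j u)"

text \<open>A cpo: a poset in which every chain, including the empty chain, has a join.\<close>
definition cpo :: "'a set \<Rightarrow> ('a \<Rightarrow> 'a \<Rightarrow> bool) \<Rightarrow> bool" where
  "cpo S le \<longleftrightarrow> partial_order_on S le \<and>
     (\<forall>C. is_chain S le C \<longrightarrow> (\<exists>j. is_join S le C j))"

definition cpo_map :: "'a set \<Rightarrow> ('a \<Rightarrow> 'a \<Rightarrow> bool) \<Rightarrow> 'b set \<Rightarrow> ('b \<Rightarrow> 'b \<Rightarrow> bool)
    \<Rightarrow> ('a \<Rightarrow> 'b) \<Rightarrow> bool" where
  "cpo_map S le T le' f \<longleftrightarrow> (\<forall>x\<in>S. f x \<in> T) \<and>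
     (\<forall>C j. is_chain S le C \<and> is_join S le C j \<longrightarrow> is_join T le' (f ` C) (f j))"

text \<open>Monomorphisms of CPO are exactly the injective cpo maps.\<close>
definition cpo_mono :: "'a set \<Rightarrow> ('a \<Rightarrow> 'a \<Rightarrow> bool) \<Rightarrow> 'b set \<Rightarrow> ('b \<Rightarrow> 'b \<Rightarrow> bool)
    \<Rightarrow> ('a \<Rightarrow> 'b) \<Rightarrow> bool" where
  "cpo_mono S le T le' f \<longleftrightarrow> cpo_map S le T le' f \<and> inj_on f S"

definition cpo_iso :: "'a set \<Rightarrow> ('a \<Rightarrow> 'a \<Rightarrow> bool) \<Rightarrow> 'b set \<Rightarrow> ('b \<Rightarrow> 'b \<Rightarrow> bool)
    \<Rightarrow> ('a \<Rightarrow> 'b) \<Rightarrow> bool" where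
  "cpo_iso S le T le' f \<longleftrightarrow> cpo_map S le T le' f \<and>
     (\<exists>g. cpo_map T le' S le g \<and> (\<forall>x\<in>S. g (f x) = x) \<and> (\<forall>y\<in>T. f (g y) = y))"

definition three :: "nat set" where "three = {0, 1, 2}"
definition le3 :: "nat \<Rightarrow> nat \<Rightarrow> bool" where "le3 x y \<longleftrightarrow> x \<le> y"

end

theory Submission
  imports Defs
begin

text \<open>Since 0 is the join of the empty chain in 3, a cpo map out of 3 must send it to the
  bottom element; conversely every chain \<bottom> \<le> q \<le> r in a cpo is the image of a cpo map
  out of 3, because all chains of 3 are finite and their joins are maxima.
  Two distinct cpo maps f, g differ at some x, and the map with image \<bottom> \<le> x \<le> x detects that.
  A monomorphism f that is not an isomorphism is either not surjective, missing some y,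
  or not order reflecting, with f a \<le> f b but not a \<le> b. The map with image \<bottom> \<le> y \<le> y,
  respectively \<bottom> \<le> f a \<le> f b, cannot factor through f: a factorization would hit y,
  respectively be a monotone map taking the values a and b at 1 and 2.\<close>

lemma partial_order_on_refl: "partial_order_on S le \<Longrightarrow> x \<in> S \<Longrightarrow> le x x"
  by (simp add: partial_order_on_def)

lemma cpo_map_in_carrier: "cpo_map S le T le' f \<Longrightarrow> x \<in> S \<Longrightarrow> f x \<in> T"
  by (simp add: cpo_map_def)

lemma cpo_map_mono:
  assumes "partial_order_on S le" "cpo_map S le T le' f" "x \<in> S" "y \<in> S" "le x y"
  shows "le' (f x) (f y)"
proof -
  have chain: "is_chain S le {x, y}" and join: "is_join S le {x, y} y"
    using assms partial_order_on_refl[OF assms(1)] unfolding is_chain_def is_join_def by auto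
  have "is_join T le' (f ` {x, y}) (f y)"
    using assms(2) chain join unfolding cpo_map_def by blast
  thus ?thesis unfolding is_join_def by auto
qed

lemma cpo_has_bottom: "cpo S le \<Longrightarrow> \<exists>p. is_join S le {} p"
  unfolding cpo_def is_chain_def by auto

lemma is_join_empty_iff: "is_join S le {} p \<longleftrightarrow> p \<in> S \<and> (\<forall>u\<in>S. le p u)"
  by (simp add: is_join_def)

lemma partial_order_three: "partial_order_on three le3"
  unfolding partial_order_on_def le3_def by auto

lemma is_join_three_nonempty:
  assumes "is_chain three le3 C" "is_join three le3 C j" "C \<noteq> {}"
  shows "j = Max C" "j \<in> C"
proof -
  have C: "finite C" "C \<subseteq> three" using assms(1) unfolding is_chain_def three_def
    by (auto intro: finite_subset)
  then have max: "Max C \<in> C" using assms(3) by simp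
  then have "Max C \<in> three" using C by blast
  then have "j \<le> Max C" using assms(2) C(1) unfolding is_join_def le3_def by simp
  moreover have "Max C \<le> j" using assms(2) max unfolding is_join_def le3_def by simp
  ultimately show "j = Max C" by simp
  with max show "j \<in> C" by simp
qed

definition three_chain_map :: "'a \<Rightarrow> 'a \<Rightarrow> 'a \<Rightarrow> nat \<Rightarrow> 'a" where
  "three_chain_map p q r t = (if t = 0 then p else if t = 1 then q else r)"

lemma three_chain_map_simps [simp]:
  "three_chain_map p q r 0 = p" "three_chain_map p q r 1 = q" "three_chain_map p q r 2 = r"
  by (simp_all add: three_chain_map_def)

lemma cpo_map_three_chain_map:
  assumes po: "partial_order_on S le" and bot: "is_join S le {} p"
    and "q \<in> S" "r \<in> S" "le q r"
  shows "cpo_map three le3 S le (three_chain_map p q r)"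
  unfolding cpo_map_def
proof (intro conjI allI impI ballI)
  let ?h = "three_chain_map p q r"
  have p: "p \<in> S" "\<And>u. u \<in> S \<Longrightarrow> le p u" using bot by (auto simp: is_join_empty_iff)
  show in_S: "?h t \<in> S" if "t \<in> three" for t
    using p assms by (simp add: three_chain_map_def)
  have mono: "le (?h s) (?h t)" if "s \<in> three" "t \<in> three" "s \<le> t" for s t
    using that p assms partial_order_on_refl[OF po] unfolding three_def three_chain_map_def
    by auto
  fix C j assume "is_chain three le3 C \<and> is_join three le3 C j"
  then have chain: "is_chain three le3 C" and join: "is_join three le3 C j" by auto
  show "is_join S le (?h ` C) (?h j)"
  proof (cases "C = {}")
    case True
    then have "j = 0" using join unfolding is_join_def three_def le3_def by auto
    then show ?thesis using True bot by simp
  next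
    case False
    note j = is_join_three_nonempty[OF chain join False]
    have "finite C" "C \<subseteq> three" using chain unfolding is_chain_def three_def
      by (auto intro: finite_subset)
    then have "le (?h x) (?h j)" if "x \<in> C" for x
      using mono[of x j] that j Max_ge[of C x] by (simp add: subsetD)
    then show ?thesis using in_S \<open>C \<subseteq> three\<close> j(2) unfolding is_join_def by auto
  qed
qed

lemma cpo_iso_if_surjective_order_reflecting:
  assumes poA: "partial_order_on SA leA" and mono: "cpo_mono SA leA SB leB f"
    and surj: "SB \<subseteq> f ` SA"
    and reflect: "\<And>a b. a \<in> SA \<Longrightarrow> b \<in> SA \<Longrightarrow> leB (f a) (f b) \<Longrightarrow> leA a b"
  shows "cpo_iso SA leA SB leB f"
proof -
  have f: "cpo_map SA leA SB leB f" and inj: "inj_on f SA"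
    using mono unfolding cpo_mono_def by auto
  define g where "g = inv_into SA f"
  have gS: "\<And>y. y \<in> SB \<Longrightarrow> g y \<in> SA" and fg: "\<And>y. y \<in> SB \<Longrightarrow> f (g y) = y"
    using surj unfolding g_def by (auto intro: inv_into_into f_inv_into_f)
  have gf: "\<And>x. x \<in> SA \<Longrightarrow> g (f x) = x" using inj unfolding g_def by auto
  have "cpo_map SB leB SA leA g"
    unfolding cpo_map_def
  proof (intro conjI allI impI ballI)
    show "\<And>y. y \<in> SB \<Longrightarrow> g y \<in> SA" by (rule gS)
    fix C j assume "is_chain SB leB C \<and> is_join SB leB C j"
    then have C: "C \<subseteq> SB" and j: "j \<in> SB" "\<forall>x\<in>C. leB x j"
      and least: "\<forall>u\<in>SB. (\<forall>x\<in>C. leB x u) \<longrightarrow> leB j u"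
      unfolding is_chain_def is_join_def by auto
    show "is_join SA leA (g ` C) (g j)" unfolding is_join_def
    proof (intro conjI ballI impI)
      show "g j \<in> SA" using gS j(1) .
      fix y assume "y \<in> g ` C"
      then show "leA y (g j)" using reflect C gS j fg by auto
    next
      fix u assume u: "u \<in> SA" "\<forall>x\<in>g ` C. leA x u"
      have "leB x (f u)" if "x \<in> C" for x
        using cpo_map_mono[OF poA f, of "g x" u] u that C gS fg by force
      then have "leB j (f u)" using least cpo_map_in_carrier[OF f u(1)] by auto
      then show "leA (g j) u" using reflect[of "g j" u] fg j(1) gS u(1) by auto
    qed
  qed
  then show ?thesis unfolding cpo_iso_def using f gf fg by blast
qed

lemma not_cpo_iso_obtains_unlifted_pair:
  assumes poA: "partial_order_on SA leA" and poB: "partial_order_on SB leB"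
    and mono: "cpo_mono SA leA SB leB f" and not_iso: "\<not> cpo_iso SA leA SB leB f"
  obtains q r where "q \<in> SB" "r \<in> SB" "leB q r"
    "\<not> (\<exists>a\<in>SA. \<exists>b\<in>SA. f a = q \<and> f b = r \<and> leA a b)"
proof (cases "SB \<subseteq> f ` SA")
  case False
  then obtain y where "y \<in> SB" "y \<notin> f ` SA" by blast
  then show ?thesis using that[of y y] partial_order_on_refl[OF poB] by blast
next
  case True
  then obtain a b where ab: "a \<in> SA" "b \<in> SA" "leB (f a) (f b)" "\<not> leA a b"
    using cpo_iso_if_surjective_order_reflecting[OF poA mono] not_iso by blast
  have "inj_on f SA" "\<forall>x\<in>SA. f x \<in> SB"
    using mono unfolding cpo_mono_def cpo_map_def by auto
  with ab show ?thesis using that[of "f a" "f b"] by (metis inj_onD)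
qed

lemma factorization_of_three_chain_map:
  assumes "cpo_map three le3 SA leA k" "\<forall>t\<in>three. f (k t) = three_chain_map p q r t"
  shows "k 1 \<in> SA" "k 2 \<in> SA" "leA (k 1) (k 2)" "f (k 1) = q" "f (k 2) = r"
proof -
  show "k 1 \<in> SA" "k 2 \<in> SA"
    using cpo_map_in_carrier[OF assms(1)] by (simp_all add: three_def)
  show "leA (k 1) (k 2)"
    by (rule cpo_map_mono[OF partial_order_three assms(1)]) (simp_all add: three_def le3_def)
  show "f (k 1) = q" "f (k 2) = r" using assms(2) by (simp_all add: three_def three_chain_map_def)
qed

lemma three_separates_cpo_maps:
  assumes "cpo SA leA" "cpo_map SA leA SB leB f" "cpo_map SA leA SB leB g"
    and "x \<in> SA" "f x \<noteq> g x"
  shows "\<exists>h. cpo_map three le3 SA leA h \<and> (\<exists>t\<in>three. f (h t) \<noteq> g (h t))"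
proof -
  obtain p where p: "is_join SA leA {} p" using cpo_has_bottom assms(1) by blast
  have po: "partial_order_on SA leA" using assms(1) unfolding cpo_def by blast
  have "cpo_map three le3 SA leA (three_chain_map p x x)"
    using cpo_map_three_chain_map[OF po p assms(4,4) partial_order_on_refl[OF po assms(4)]] .
  moreover have "1 \<in> three" "f (three_chain_map p x x 1) \<noteq> g (three_chain_map p x x 1)"
    using assms(5) by (simp_all add: three_def three_chain_map_def)
  ultimately show ?thesis by blast
qed

lemma three_detects_proper_mono:
  assumes "cpo SA leA" "cpo SB leB" "cpo_mono SA leA SB leB f" "\<not> cpo_iso SA leA SB leB f"
  shows "\<exists>h. cpo_map three le3 SB leB h \<and>
           \<not> (\<exists>k. cpo_map three le3 SA leA k \<and> (\<forall>t\<in>three. f (k t) = h t))"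
proof -
  have poA: "partial_order_on SA leA" and poB: "partial_order_on SB leB"
    using assms(1,2) unfolding cpo_def by auto
  obtain p where p: "is_join SB leB {} p" using cpo_has_bottom assms(2) by blast
  obtain q r where "q \<in> SB" "r \<in> SB" "leB q r"
    and unlifted: "\<not> (\<exists>a\<in>SA. \<exists>b\<in>SA. f a = q \<and> f b = r \<and> leA a b)"
    using not_cpo_iso_obtains_unlifted_pair[OF poA poB assms(3,4)] by blast
  then have "cpo_map three le3 SB leB (three_chain_map p q r)"
    using cpo_map_three_chain_map[OF poB p] by blast
  moreover have "\<not> (\<exists>k. cpo_map three le3 SA leA k \<and>
                      (\<forall>t\<in>three. f (k t) = three_chain_map p q r t))"
  proof
    assume "\<exists>k. cpo_map three le3 SA leA k \<and> (\<forall>t\<in>three. f (k t) = three_chain_map p q r t)"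
    then obtain k where "cpo_map three le3 SA leA k"
      "\<forall>t\<in>three. f (k t) = three_chain_map p q r t" by blast
    note factorization_of_three_chain_map[OF this]
    with unlifted show False by blast
  qed
  ultimately show ?thesis by blast
qed

theorem mainTheorem5:
  shows "(\<forall>(SA :: 'a set) leA (SB :: 'b set) leB f g.
            cpo SA leA \<and> cpo SB leB \<and>
            cpo_map SA leA SB leB f \<and> cpo_map SA leA SB leB g \<and>
            (\<exists>x\<in>SA. f x \<noteq> g x) \<longrightarrow>
            (\<exists>h. cpo_map three le3 SA leA h \<and> (\<exists>t\<in>three. f (h t) \<noteq> g (h t))))
       \<and> (\<forall>(SA :: 'c set) leA (SB :: 'd set) leB f.
            cpo SA leA \<and> cpo SB leB \<and>
            cpo_mono SA leA SB leB f \<and> \<not> cpo_iso SA leA SB leB f \<longrightarrow>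
            (\<exists>h. cpo_map three le3 SB leB h \<and>
                 \<not> (\<exists>k. cpo_map three le3 SA leA k \<and> (\<forall>t\<in>three. f (k t) = h t))))"
proof (intro conjI allI impI)
  fix SA :: "'a set" and leA and SB :: "'b set" and leB f g
  assume a: "cpo SA leA \<and> cpo SB leB \<and> cpo_map SA leA SB leB f \<and> cpo_map SA leA SB leB g \<and>
            (\<exists>x\<in>SA. f x \<noteq> g x)"
  then obtain x where "x \<in> SA" "f x \<noteq> g x" by blast
  with a show "\<exists>h. cpo_map three le3 SA leA h \<and> (\<exists>t\<in>three. f (h t) \<noteq> g (h t))"
    using three_separates_cpo_maps[of SA leA SB leB f g x] by blast
next
  fix SA :: "'c set" and leA and SB :: "'d set" and leB f
  assume "cpo SA leA \<and> cpo SB leB \<and> cpo_mono SA leA SB leB f \<and> \<not> cpo_iso SA leA SB leB f"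
  then show "\<exists>h. cpo_map three le3 SB leB h \<and>
                 \<not> (\<exists>k. cpo_map three le3 SA leA k \<and> (\<forall>t\<in>three. f (k t) = h t))"
    using three_detects_proper_mono[of SA leA SB leB f] by blast
qed

end
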